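(* Let $p$ be an odd prime, $e\geq 2$, and $N$ cyclic of order $p^e$. Let $G$ be a transitive subgroup of $\mathrm{Hol}(N)$, $H$ any subgroup of $G$ of index $p^e$, and $C=\mathrm{Core}_G(H)$. The following are equivalent: (1) $G/C$ is isomorphic to a transitive subgroup $T$ of $\mathrm{Hol}(N)$ under an isomorphism that sends $H/C$ to $\mathrm{Stab}_T(1_N)$; (2) $H$ is conjugate to $\mathrm{Stab}_G(1_N)$ in $G$.
   Context: $\mathrm{Hol}(N)=N\rtimes\mathrm{Aut}(N)$ acts on $N$ by $(\eta,\alpha)\cdot x=\eta\,\alpha(x)$; a subgroup is transitive if it acts transitively on $N$, and $\mathrm{Stab}_T(1_N)=T\cap\mathrm{Aut}(N)$ is the stabiliser of the identity. $\mathrm{Core}_G(H)$ is the largest normal subgroup of $G$ contained in $H$. *)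

theory Defs
  imports "HOL-Algebra.Algebra"
begin

definition Hol :: "'a monoid \<Rightarrow> ('a \<times> ('a \<Rightarrow> 'a)) monoid" where
  "Hol N = \<lparr> carrier = carrier N \<times> auto N,
             monoid.mult = (\<lambda>s t. (fst s \<otimes>\<^bsub>N\<^esub> snd s (fst t), compose (carrier N) (snd s) (snd t))),
             monoid.one = (\<one>\<^bsub>N\<^esub>, (\<lambda>x\<in>carrier N. x)) \<rparr>"

definition hol_act :: "'a monoid \<Rightarrow> ('a \<times> ('a \<Rightarrow> 'a)) \<Rightarrow> 'a \<Rightarrow> 'a" where
  "hol_act N t x = fst t \<otimes>\<^bsub>N\<^esub> (snd t) x"

definition hol_transitive :: "'a monoid \<Rightarrow> ('a \<times> ('a \<Rightarrow> 'a)) set \<Rightarrow> bool" where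
  "hol_transitive N T \<longleftrightarrow>
     (\<forall>x\<in>carrier N. \<forall>y\<in>carrier N. \<exists>t\<in>T. hol_act N t x = y)"

text \<open>Stab_T(1_N) = T \<inter> Aut(N), where Aut(N) is embedded as the pairs (1, alpha).\<close>
definition hol_stab :: "'a monoid \<Rightarrow> ('a \<times> ('a \<Rightarrow> 'a)) set \<Rightarrow> ('a \<times> ('a \<Rightarrow> 'a)) set" where
  "hol_stab N T = T \<inter> ({\<one>\<^bsub>N\<^esub>} \<times> auto N)"

definition core :: "('g, 'b) monoid_scheme \<Rightarrow> 'g set \<Rightarrow> 'g set" where
  "core G H = (\<Inter>g\<in>carrier G. g <#\<^bsub>G\<^esub> H #>\<^bsub>G\<^esub> inv\<^bsub>G\<^esub> g)"

end

theory Submission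
  imports Defs "HOL-Number_Theory.Number_Theory"
begin

text \<open>
  Write \<open>N\<close> additively as \<open>\<int>/p\<^sup>e\<close>, so that \<open>Hol(N)\<close> is the affine group of maps
  \<open>x \<mapsto> b + u x\<close>. If \<open>H\<close> is conjugate to the point stabiliser, its core is the kernel of
  the action of \<open>G\<close> on \<open>N\<close>, which is trivial, and conjugation maps \<open>G/C = G\<close> onto itself
  and \<open>H/C\<close> onto \<open>Stab\<^sub>G(1)\<close>.

  Conversely, let \<open>G/C\<close> be isomorphic to a transitive \<open>T\<close>, and let \<open>m = \<phi>(p\<^sup>e)\<close>. Every
  \<open>m\<close>-th power in \<open>Hol(N)\<close> lies in the normal subgroup \<open>P\<close> of translations of order \<open>p\<close>,
  whereas some \<open>m\<close>-th power in a transitive group is non-trivial. A non-trivial translation in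
  \<open>H\<close> would generate a group containing \<open>P\<close>, so \<open>P \<subseteq> C\<close> and \<open>G/C\<close> would have exponent
  dividing \<open>m\<close>. Hence \<open>H\<close> contains no translations, embeds into the cyclic group of units
  modulo \<open>p\<^sup>e\<close>, and is cyclic; lifting the exponent shows that a generator, all of whose
  powers are translation-free, has a fixed point. So \<open>H\<close> lies in a conjugate of the point
  stabiliser, and the two have the same index \<open>p\<^sup>e\<close>.
\<close>

section \<open>Arithmetic modulo odd prime powers\<close>

lemma sum_powers_add:
  fixes u :: "'a::comm_semiring_1"
  shows "(\<Sum>i<a + b. u ^ i) = (\<Sum>i<a. u ^ i) + u ^ a * (\<Sum>i<b. u ^ i)"
  by (induction b) (simp_all add: algebra_simps power_add)

lemma sum_powers_mult:
  fixes u :: "'a::comm_semiring_1"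
  shows "(\<Sum>i<a * b. u ^ i) = (\<Sum>i<a. u ^ i) * (\<Sum>i<b. (u ^ a) ^ i)"
proof (induction b)
  case (Suc b)
  have "(\<Sum>i<a * b + a. u ^ i) = (\<Sum>i<a * b. u ^ i) + u ^ (a * b) * (\<Sum>i<a. u ^ i)"
    by (rule sum_powers_add)
  then show ?case
    using Suc by (simp add: add.commute algebra_simps power_mult)
qed simp

lemma sum_powers_cong_one:
  fixes u :: int
  assumes "[u = 1] (mod q)"
  shows "[(\<Sum>i<k. u ^ i) = int k] (mod q)"
proof -
  have "[(\<Sum>i<k. u ^ i) = (\<Sum>i<k. 1)] (mod q)"
    using assms by (intro cong_sum) (metis cong_pow power_one)
  then show ?thesis by simp
qed

lemma power_one_plus_mult_cong:
  fixes q t :: int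
  shows "[(1 + q * t) ^ i = 1 + int i * q * t] (mod q ^ 2)"
proof (induction i)
  case (Suc i)
  have "[(1 + q * t) ^ Suc i = (1 + int i * q * t) * (1 + q * t)] (mod q ^ 2)"
    using cong_mult[OF Suc cong_refl] by (simp add: mult.commute)
  also have "(1 + int i * q * t) * (1 + q * t) = 1 + int (Suc i) * q * t + q ^ 2 * (int i * t * t)"
    by (simp add: algebra_simps power2_eq_square)
  also have "[\<dots> = 1 + int (Suc i) * q * t] (mod q ^ 2)"
    by (simp add: cong_iff_dvd_diff)
  finally show ?case .
qed simp

text \<open>The base case of lifting the exponent: for odd \<open>p\<close> the quadratic term of the binomial
  expansion drops out modulo \<open>p\<^sup>2\<close>, because \<open>p\<close> divides \<open>p (p - 1) / 2\<close>.\<close>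

lemma sum_powers_prime_cong:
  fixes u :: int
  assumes p: "Factorial_Ring.prime p" "odd p" and u: "[u = 1] (mod int p)"
  shows "[(\<Sum>i<p. u ^ i) = int p] (mod (int p)\<^sup>2)"
proof -
  have "int p dvd u - 1"
    using u by (simp add: cong_iff_dvd_diff)
  then obtain t where "u - 1 = int p * t" ..
  then have t: "u = 1 + int p * t"
    by simp
  obtain r where r: "p = 2 * r + 1"
    using p(2) oddE by blast
  have double_sum: "2 * (\<Sum>i<k. int i) = int k * (int k - 1)" for k
    by (induction k) (simp_all add: algebra_simps)
  have "2 * (\<Sum>i<p. int i) = 2 * (int p * int r)"
    using double_sum[of p] r by simp
  then have gauss: "(\<Sum>i<p. int i) = int p * int r"
    by simp
  have "[(\<Sum>i<p. u ^ i) = (\<Sum>i<p. 1 + int i * int p * t)] (mod (int p)\<^sup>2)"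
    unfolding t by (intro cong_sum power_one_plus_mult_cong)
  also have "(\<Sum>i<p. 1 + int i * int p * t) = int p + (int p)\<^sup>2 * (t * int r)"
    by (simp add: sum.distrib gauss flip: sum_distrib_right) (simp add: power2_eq_square algebra_simps)
  also have "[\<dots> = int p] (mod (int p)\<^sup>2)"
    by (simp add: cong_iff_dvd_diff)
  finally show ?thesis .
qed

lemma sum_powers_prime_power:
  fixes u :: int
  assumes p: "Factorial_Ring.prime p" "odd p" and u: "[u = 1] (mod int p)"
  shows "\<exists>w. (\<Sum>i<p ^ k. u ^ i) = int p ^ k * w \<and> [w = 1] (mod int p)"
proof (induction k)
  case (Suc k)
  then obtain w where w: "(\<Sum>i<p ^ k. u ^ i) = int p ^ k * w" "[w = 1] (mod int p)"
    by blast
  have "[u ^ p ^ k = 1] (mod int p)"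
    using u by (metis cong_pow power_one)
  then have "[(\<Sum>i<p. (u ^ p ^ k) ^ i) = int p] (mod (int p)\<^sup>2)"
    by (rule sum_powers_prime_cong[OF p])
  then have "(int p)\<^sup>2 dvd (\<Sum>i<p. (u ^ p ^ k) ^ i) - int p"
    by (simp add: cong_iff_dvd_diff)
  then obtain s where "(\<Sum>i<p. (u ^ p ^ k) ^ i) - int p = (int p)\<^sup>2 * s" ..
  then have s: "(\<Sum>i<p. (u ^ p ^ k) ^ i) = int p + (int p)\<^sup>2 * s"
    by simp
  have "(\<Sum>i<p ^ Suc k. u ^ i) = (\<Sum>i<p ^ k * p. u ^ i)"
    by (simp only: power_Suc2)
  also have "\<dots> = int p ^ k * w * (int p + (int p)\<^sup>2 * s)"
    by (simp only: sum_powers_mult w(1) s)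
  also have "\<dots> = int p ^ Suc k * (w * (1 + int p * s))"
    by (simp add: power2_eq_square algebra_simps)
  moreover have "[1 + int p * s = 1] (mod int p)"
    by (simp add: cong_iff_dvd_diff)
  then have "[w * (1 + int p * s) = 1 * 1] (mod int p)"
    by (rule cong_mult[OF w(2)])
  ultimately show ?case
    by auto
qed simp

lemma euler_theorem_int:
  fixes u :: int
  assumes "coprime u (int m)"
  shows "[u ^ totient m = 1] (mod int m)"
proof (cases "m \<le> 1")
  case True
  then show ?thesis
    by (cases m) (auto simp: cong_def)
next
  case False
  then have "residues (int m)"
    by (simp add: residues_def)
  then show ?thesis
    using residues.euler_theorem[OF _ assms] by simp
qed

lemma coprime_if_not_prime_dvd:
  fixes x :: int
  assumes "Factorial_Ring.prime p" "\<not> int p dvd x"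
  shows "coprime x (int p)"
  using assms prime_imp_coprime[of "int p" x] by (simp add: coprime_commute)

lemma prime_power_decompose:
  fixes d :: int
  assumes "Factorial_Ring.prime p" "\<not> int p ^ e dvd d"
  obtains j w where "d = int p ^ j * w" "\<not> int p dvd w" "j < e"
proof -
  have "d \<noteq> 0" "\<not> is_unit (int p)"
    using assms by (auto simp: prime_nat_iff)
  then obtain w where w: "d = int p ^ multiplicity (int p) d * w" "\<not> int p dvd w"
    by (rule multiplicity_decompose')
  moreover have "multiplicity (int p) d < e"
  proof (rule ccontr)
    assume "\<not> multiplicity (int p) d < e"
    then have "int p ^ e dvd d"
      using w(1) by (metis dvd_mult2 le_imp_power_dvd not_less)
    then show False
      using assms(2) by blast
  qed
  ultimately show ?thesis
    using that by blast
qed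

lemma prime_power_dvd_sum_powers_totient:
  fixes u :: int
  assumes p: "Factorial_Ring.prime p" "odd p" and e: "0 < e" and u: "\<not> int p dvd u"
  shows "int p ^ (e - 1) dvd (\<Sum>i<totient (p ^ e). u ^ i)"
proof (cases "[u = 1] (mod int p)")
  case True
  obtain w where "(\<Sum>i<p ^ (e - 1). u ^ i) = int p ^ (e - 1) * w"
    using sum_powers_prime_power[OF p True] by blast
  then show ?thesis
    using sum_powers_mult[where a = "p ^ (e - 1)" and b = "p - 1" and u = u]
    by (simp add: totient_prime_power p e)
next
  case False
  have "coprime (u - 1) (int p)"
    using False p(1) by (simp add: cong_iff_dvd_diff coprime_if_not_prime_dvd)
  then have "coprime (u - 1) (int (p ^ e))"
    by simp
  moreover have "coprime u (int (p ^ e))"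
    using coprime_if_not_prime_dvd[OF p(1) u] by simp
  from euler_theorem_int[OF this] have "int (p ^ e) dvd u ^ totient (p ^ e) - 1"
    by (simp add: cong_iff_dvd_diff)
  then have "int (p ^ e) dvd (u - 1) * (\<Sum>i<totient (p ^ e). u ^ i)"
    by (simp add: power_diff_1_eq)
  ultimately have "int p ^ e dvd (\<Sum>i<totient (p ^ e). u ^ i)"
    by (simp add: coprime_dvd_mult_right_iff coprime_commute)
  then show ?thesis
    by (rule dvd_trans[rotated]) (simp add: le_imp_power_dvd)
qed

lemma not_dvd_sum_powers_totient:
  fixes u :: int
  assumes p: "Factorial_Ring.prime p" "odd p" and e: "0 < e" and u: "[u = 1] (mod int p)"
  shows "\<not> int p ^ e dvd (\<Sum>i<totient (p ^ e). u ^ i)"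
proof
  assume dvd: "int p ^ e dvd (\<Sum>i<totient (p ^ e). u ^ i)"
  obtain w where w: "(\<Sum>i<p ^ (e - 1). u ^ i) = int p ^ (e - 1) * w" "[w = 1] (mod int p)"
    using sum_powers_prime_power[OF p u] by blast
  define s where "s = (\<Sum>i<p - 1. (u ^ p ^ (e - 1)) ^ i)"
  have "[u ^ p ^ (e - 1) = 1] (mod int p)"
    using u by (metis cong_pow power_one)
  then have s_cong: "[s = int (p - 1)] (mod int p)"
    unfolding s_def by (rule sum_powers_cong_one)
  have pe: "int p ^ (e - 1) * int p = int p ^ e"
    using e by (cases e) simp_all
  have "(\<Sum>i<totient (p ^ e). u ^ i) = int p ^ (e - 1) * (w * s)"
    using e w(1) by (simp add: totient_prime_power p s_def sum_powers_mult mult.assoc)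
  then have "int p ^ (e - 1) * int p dvd int p ^ (e - 1) * (w * s)"
    using dvd by (simp only: pe)
  then have "int p dvd w * s"
    using p(1) by (simp add: prime_gt_0_nat)
  then have "int p dvd w \<or> int p dvd s"
    using p(1) by (simp add: prime_dvd_mult_iff)
  moreover have "\<not> int p dvd w"
    using cong_dvd_iff[OF w(2)] prime_gt_1_nat[OF p(1)] by simp
  moreover have "\<not> int p dvd s"
    using cong_dvd_iff[OF s_cong] prime_gt_1_nat[OF p(1)] by (auto dest: zdvd_imp_le)
  ultimately show False
    by blast
qed

lemma ex_multiple_cong:
  fixes d c :: int
  assumes p: "Factorial_Ring.prime p" and d: "\<not> int p ^ e dvd d" and c: "int p ^ e dvd int p * c"
  shows "\<exists>k::nat. [int k * d = c] (mod int p ^ e)"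
proof -
  obtain j w where w: "d = int p ^ j * w" "\<not> int p dvd w" "j < e"
    using prime_power_decompose[OF p d] .
  have pe: "int p ^ (e - 1) * int p = int p ^ e"
    using w(3) by (cases e) simp_all
  have "int p * int p ^ (e - 1) dvd int p * c"
    using c pe by (metis mult.commute)
  then have "int p ^ (e - 1) dvd c"
    using prime_gt_0_nat[OF p] by simp
  then obtain z where z: "c = int p ^ (e - 1) * z" ..
  obtain w' where w': "[w * w' = 1] (mod int p)"
    using cong_solve_coprime_int coprime_if_not_prime_dvd[OF p w(2)] by blast
  define k0 where "k0 = int p ^ (e - 1 - j) * z * w'"
  have "int p dvd w * w' - 1"
    using w' by (simp add: cong_iff_dvd_diff)
  then have "int p ^ (e - 1) * int p dvd int p ^ (e - 1) * (z * (w * w' - 1))"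
    by (simp add: mult_dvd_mono)
  moreover have "k0 * d - c = int p ^ (e - 1) * (z * (w * w' - 1))"
    using w(3) by (simp add: k0_def w(1) z algebra_simps flip: power_add)
  ultimately have "int p ^ e dvd k0 * d - c"
    by (simp only: pe)
  then have k0: "[k0 * d = c] (mod int p ^ e)"
    by (simp add: cong_iff_dvd_diff)
  have "[int (nat (k0 mod int p ^ e)) * d = k0 * d] (mod int p ^ e)"
    using p by (simp add: prime_gt_0_nat cong_scalar_right cong_mod_left)
  then show ?thesis
    using k0 cong_trans by blast
qed

lemma not_prime_power_dvd_mult_totient:
  fixes x :: int
  assumes p: "Factorial_Ring.prime p" and e: "0 < e" and x: "\<not> int p dvd x"
  shows "\<not> int p ^ e dvd x * int (totient (p ^ e))"
proof
  assume dvd: "int p ^ e dvd x * int (totient (p ^ e))"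
  obtain e' where e': "e = Suc e'"
    using e gr0_implies_Suc by blast
  have "int (totient (p ^ e)) = int p ^ e' * int (p - 1)"
    by (simp only: e' totient_prime_power_Suc[OF p] of_nat_mult of_nat_power)
  moreover have "int p ^ e = int p ^ e' * int p"
    by (simp only: e' power_Suc2)
  ultimately have "int p ^ e' * int p dvd int p ^ e' * (x * int (p - 1))"
    using dvd by (metis mult.left_commute)
  then have "int p dvd x * int (p - 1)"
    using prime_gt_0_nat[OF p] by simp
  then have "int p dvd int (p - 1)"
    using x p by (simp add: prime_dvd_mult_iff)
  then show False
    using prime_gt_1_nat[OF p] by (auto dest: zdvd_imp_le)
qed

lemma dvd_translation_part_if_translation_free:
  fixes b u w :: int
  assumes p: "Factorial_Ring.prime p" "odd p" and u: "u - 1 = int p ^ j * w" "0 < j" "j < e"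
    and translation: "\<And>k. [u ^ k = 1] (mod int p ^ e) \<Longrightarrow> int p ^ e dvd b * (\<Sum>i<k. u ^ i)"
  shows "int p ^ j dvd b"
proof -
  have split: "int p ^ j * int p ^ (e - j) = int p ^ e"
    using u(3) by (simp flip: power_add)
  have "[u = 1] (mod int p)"
    using u(1,2) by (simp add: cong_iff_dvd_diff)
  then obtain w' where w': "(\<Sum>i<p ^ (e - j). u ^ i) = int p ^ (e - j) * w'" "[w' = 1] (mod int p)"
    using sum_powers_prime_power[OF p] by blast
  have "u ^ p ^ (e - j) - 1 = int p ^ e * (w * w')"
    using power_diff_1_eq[of u "p ^ (e - j)"] u(1) w'(1) split by (simp add: algebra_simps)
  then have "int p ^ e dvd b * (\<Sum>i<p ^ (e - j). u ^ i)"
    by (intro translation) (simp add: cong_iff_dvd_diff)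
  then have "int p ^ (e - j) * int p ^ j dvd int p ^ (e - j) * (b * w')"
    using split w'(1) by (simp add: algebra_simps)
  then have "int p ^ j dvd b * w'"
    using p(1) by (simp add: prime_gt_0_nat)
  moreover have "coprime (int p ^ j) w'"
    using coprime_if_not_prime_dvd[OF p(1), of w'] cong_dvd_iff[OF w'(2)] prime_gt_1_nat[OF p(1)]
    by (simp add: coprime_commute)
  ultimately show ?thesis
    by (simp add: coprime_dvd_mult_left_iff)
qed

lemma affine_fixed_point_cong:
  fixes b u :: int
  assumes p: "Factorial_Ring.prime p" "odd p" and u: "\<not> int p dvd u"
    and translation: "\<And>k. [u ^ k = 1] (mod int p ^ e) \<Longrightarrow> int p ^ e dvd b * (\<Sum>i<k. u ^ i)"
  shows "\<exists>x. [b + u * x = x] (mod int p ^ e)"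
proof (cases "int p ^ e dvd u - 1")
  case True
  then have "int p ^ e dvd b"
    using translation[of 1] by (simp add: cong_iff_dvd_diff)
  then have "[b + u * 0 = 0] (mod int p ^ e)"
    by (simp add: cong_0_iff)
  then show ?thesis ..
next
  case False
  obtain j w where w: "u - 1 = int p ^ j * w" "\<not> int p dvd w" "j < e"
    using prime_power_decompose[OF p(1) False] .
  have split: "int p ^ j * int p ^ (e - j) = int p ^ e"
    using w(3) by (simp flip: power_add)
  have "int p ^ j dvd b"
  proof (cases "j = 0")
    case False
    then show ?thesis
      using dvd_translation_part_if_translation_free[OF p w(1) _ w(3) translation] by simp
  qed simp
  then obtain b1 where b1: "b = int p ^ j * b1" ..
  have "coprime w (int p ^ (e - j))"
    using coprime_if_not_prime_dvd[OF p(1) w(2)] by simp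
  then obtain w2 where "[w * w2 = 1] (mod int p ^ (e - j))"
    using cong_solve_coprime_int by blast
  then have "int p ^ j * int p ^ (e - j) dvd int p ^ j * (b1 * (1 - w * w2))"
    by (simp add: mult_dvd_mono cong_iff_dvd_diff dvd_diff_commute)
  moreover have "b + u * (- b1 * w2) - (- b1 * w2) = int p ^ j * (b1 * (1 - w * w2))"
    using w(1) by (simp add: b1 algebra_simps)
  ultimately have "[b + u * (- b1 * w2) = - b1 * w2] (mod int p ^ e)"
    by (simp add: cong_iff_dvd_diff split)
  then show ?thesis ..
qed

lemma power_cong_if_exponent_cong:
  fixes x :: int
  assumes x: "[x ^ m = 1] (mod q)" and ij: "[i = j] (mod m)"
  shows "[x ^ i = x ^ j] (mod q)"
proof -
  have reduce: "[x ^ k = x ^ (k mod m)] (mod q)" for k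
  proof -
    have "x ^ k = x ^ (k mod m) * (x ^ m) ^ (k div m)"
      by (metis mod_mult_div_eq power_add power_mult)
    moreover have "[x ^ (k mod m) * (x ^ m) ^ (k div m) = x ^ (k mod m) * 1 ^ (k div m)] (mod q)"
      using x by (intro cong_scalar_left cong_pow)
    ultimately show ?thesis
      by simp
  qed
  show ?thesis
    using reduce[of i] reduce[of j] ij by (metis cong_def cong_sym cong_trans)
qed

lemma ex_dvd_generator_if_add_mod_closed:
  fixes K :: "nat set"
  assumes m: "0 < m" and zero: "0 \<in> K"
    and add: "\<And>i j. i \<in> K \<Longrightarrow> j \<in> K \<Longrightarrow> i + j \<in> K"
    and cong: "\<And>i j. i \<in> K \<Longrightarrow> [i = j] (mod m) \<Longrightarrow> j \<in> K"
  shows "\<exists>d\<in>K. \<forall>i\<in>K. d dvd i"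
proof -
  define d where "d = (LEAST d. 0 < d \<and> d \<in> K)"
  have "m \<in> K"
    using cong[OF zero] by (simp add: cong_def)
  have d: "0 < d \<and> d \<in> K"
    unfolding d_def by (rule LeastI[of "\<lambda>d. 0 < d \<and> d \<in> K" m]) (simp add: m \<open>m \<in> K\<close>)
  have multiple: "q * d \<in> K" for q
    by (induction q) (simp_all add: zero add d)
  have "d dvd i" if i: "i \<in> K" for i
  proof -
    obtain M where M: "m = Suc M"
      using m gr0_implies_Suc by blast
    define q r where "q = i div d" and "r = i mod d"
    have "i = q * d + r"
      by (simp add: q_def r_def)
    then have "r + q * d * m = i + (q * M) * d"
      by (simp add: M algebra_simps)
    then have "r + q * d * m \<in> K"
      using add[OF i multiple] by simp
    moreover have "[r + q * d * m = r] (mod m)"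
      by (simp add: cong_def)
    ultimately have "r \<in> K"
      by (rule cong)
    have "r < d"
      using d by (simp add: r_def)
    then have "\<not> (0 < r \<and> r \<in> K)"
      unfolding d_def by (rule not_less_Least)
    then have "r = 0"
      using \<open>r \<in> K\<close> by simp
    then show ?thesis
      by (simp add: r_def dvd_eq_mod_eq_0)
  qed
  then show ?thesis
    using d by blast
qed

lemma ex_cong_power_residue_primroot:
  fixes u :: int
  assumes m: "1 < m" and g: "residue_primroot m g" and u: "coprime u (int m)"
  shows "\<exists>i. [u = int g ^ i] (mod int m)"
proof -
  define r where "r = nat (u mod int m)"
  have r: "int r = u mod int m"
    using m by (simp add: r_def)
  have "coprime (int r) (int m)"
    using u m by (simp add: r)
  then have "coprime r m"
    by simp
  moreover have "r < m"
    using m r by (metis of_nat_less_iff pos_mod_bound of_nat_0_less_iff order.strict_trans zero_less_one)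
  moreover have "r \<noteq> 0"
  proof
    assume "r = 0"
    then show False
      using \<open>coprime r m\<close> m by simp
  qed
  ultimately have "r \<in> totatives m"
    by (simp add: totatives_def)
  then have "r \<in> (\<lambda>i. g ^ i mod m) ` {..<totient m}"
    using residue_primroot_is_generator[OF m g] by (simp add: bij_betw_def)
  then obtain i where "g ^ i mod m = r"
    by blast
  then have "int g ^ i mod int m = u mod int m"
    using r by (simp flip: of_nat_mod of_nat_power)
  then have "[u = int g ^ i] (mod int m)"
    by (simp add: cong_def)
  then show ?thesis ..
qed

section \<open>Conjugates and normal cores\<close>

context group
begin

lemma inv_mult_cancel_left [simp]: "x \<in> carrier G \<Longrightarrow> y \<in> carrier G \<Longrightarrow> inv x \<otimes> (x \<otimes> y) = y"
  by (simp add: m_assoc [symmetric])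

lemma mult_inv_cancel_left [simp]: "x \<in> carrier G \<Longrightarrow> y \<in> carrier G \<Longrightarrow> x \<otimes> (inv x \<otimes> y) = y"
  by (simp add: m_assoc [symmetric])

lemma carrier_AutoGroup: "carrier (AutoGroup G) = auto G"
  by (simp add: AutoGroup_def BijGroup_def)

lemma one_AutoGroup: "\<one>\<^bsub>AutoGroup G\<^esub> = (\<lambda>x\<in>carrier G. x)"
  by (simp add: AutoGroup_def BijGroup_def)

lemma mult_AutoGroup:
  "\<alpha> \<in> auto G \<Longrightarrow> \<beta> \<in> auto G \<Longrightarrow> \<alpha> \<otimes>\<^bsub>AutoGroup G\<^esub> \<beta> = compose (carrier G) \<alpha> \<beta>"
  by (simp add: AutoGroup_def BijGroup_def auto_def)

lemma auto_one: "\<alpha> \<in> auto G \<Longrightarrow> \<alpha> \<one> = \<one>"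
  by (simp add: auto_def hom_one[OF _ is_group is_group])

lemma subgroup_nat_pow_closed: "subgroup H G \<Longrightarrow> x \<in> H \<Longrightarrow> x [^] (k::nat) \<in> H"
  by (induction k) (auto intro: subgroup.one_closed subgroup.m_closed)

lemma conjugate_eq_image: "g <#\<^bsub>G\<^esub> S #>\<^bsub>G\<^esub> inv g = (\<lambda>s. g \<otimes> s \<otimes> inv g) ` S"
  by (auto simp: l_coset_def r_coset_def)

lemma mem_conjugate_iff:
  assumes "g \<in> carrier G" "S \<subseteq> carrier G"
  shows "x \<in> g <#\<^bsub>G\<^esub> S #>\<^bsub>G\<^esub> inv g \<longleftrightarrow> x \<in> carrier G \<and> inv g \<otimes> x \<otimes> g \<in> S"
proof
  assume "x \<in> g <#\<^bsub>G\<^esub> S #>\<^bsub>G\<^esub> inv g"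
  then obtain s where "s \<in> S" "x = g \<otimes> s \<otimes> inv g"
    by (auto simp: conjugate_eq_image)
  then show "x \<in> carrier G \<and> inv g \<otimes> x \<otimes> g \<in> S"
    using assms by (auto simp: m_assoc)
next
  assume x: "x \<in> carrier G \<and> inv g \<otimes> x \<otimes> g \<in> S"
  then have "x = g \<otimes> (inv g \<otimes> x \<otimes> g) \<otimes> inv g"
    using assms(1) by (simp add: m_assoc)
  then show "x \<in> g <#\<^bsub>G\<^esub> S #>\<^bsub>G\<^esub> inv g"
    using x by (auto simp: conjugate_eq_image)
qed

lemma image_conjugate_cancel:
  assumes "g \<in> carrier G" "S \<subseteq> carrier G"
  shows "(\<lambda>x. inv g \<otimes> x \<otimes> g) ` (g <#\<^bsub>G\<^esub> S #>\<^bsub>G\<^esub> inv g) = S"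
proof -
  have "inv g \<otimes> (g \<otimes> s \<otimes> inv g) \<otimes> g = s" if "s \<in> S" for s
    using assms that by (auto simp: m_assoc)
  then show ?thesis
    by (simp add: conjugate_eq_image image_image)
qed

lemma conjugate_subset_subgroup:
  assumes "subgroup K G" "g \<in> K" "S \<subseteq> K"
  shows "g <#\<^bsub>G\<^esub> S #>\<^bsub>G\<^esub> inv g \<subseteq> K"
  using assms by (auto simp: conjugate_eq_image intro: subgroup.m_closed subgroup.m_inv_closed)

lemma card_conjugate:
  assumes "g \<in> carrier G" "S \<subseteq> carrier G"
  shows "card (g <#\<^bsub>G\<^esub> S #>\<^bsub>G\<^esub> inv g) = card S"
proof -
  have "inj_on (\<lambda>s. g \<otimes> s \<otimes> inv g) S"
  proof (rule inj_onI)
    fix x y assume "x \<in> S" "y \<in> S" "g \<otimes> x \<otimes> inv g = g \<otimes> y \<otimes> inv g"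
    then show "x = y"
      using assms by (auto intro: conjugation_is_inj[OF assms(1)])
  qed
  then show ?thesis
    by (simp add: conjugate_eq_image card_image)
qed

lemma conjugation_iso:
  assumes g: "g \<in> carrier G"
  shows "(\<lambda>x. inv g \<otimes> x \<otimes> g) \<in> iso G G"
proof -
  have "bij_betw (\<lambda>x. inv g \<otimes> x \<otimes> g) (carrier G) (carrier G)"
    by (rule bij_betwI[where g = "\<lambda>x. g \<otimes> x \<otimes> inv g"]) (use g in \<open>auto simp: m_assoc\<close>)
  moreover have "(\<lambda>x. inv g \<otimes> x \<otimes> g) \<in> hom G G"
    by (rule homI) (use g in \<open>auto simp: m_assoc\<close>)
  ultimately show ?thesis
    by (simp add: iso_def)
qed

lemma core_eq:
  assumes "H \<subseteq> carrier G"
  shows "core G H = {x \<in> carrier G. \<forall>g\<in>carrier G. inv g \<otimes> x \<otimes> g \<in> H}"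
  using assms by (auto simp: core_def mem_conjugate_iff dest: bspec[OF _ one_closed])

lemma subset_core:
  assumes "K \<subseteq> H" "H \<subseteq> carrier G"
    and "\<And>g x. g \<in> carrier G \<Longrightarrow> x \<in> K \<Longrightarrow> inv g \<otimes> x \<otimes> g \<in> K"
  shows "K \<subseteq> core G H"
  using assms by (auto simp: core_eq)

lemma core_normal:
  assumes H: "subgroup H G"
  shows "core G H \<lhd> G"
proof -
  have H_sub: "H \<subseteq> carrier G"
    using H by (rule subgroup.subset)
  have "subgroup (core G H) G"
    unfolding core_def
  proof (rule subgroups_Inter)
    fix K assume "K \<in> (\<lambda>g. g <#\<^bsub>G\<^esub> H #>\<^bsub>G\<^esub> inv g) ` carrier G"
    then obtain g where g: "g \<in> carrier G" "K = inv (inv g) <#\<^bsub>G\<^esub> H #>\<^bsub>G\<^esub> inv g"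
      by auto
    then show "subgroup K G"
      using subgroup_conjugation_is_surj1[OF inv_closed[OF g(1)] H] by simp
  qed auto
  moreover have "x \<otimes> h \<otimes> inv x \<in> core G H" if x: "x \<in> carrier G" and h: "h \<in> core G H" for x h
  proof -
    have h_in: "h \<in> carrier G" "\<And>g. g \<in> carrier G \<Longrightarrow> inv g \<otimes> h \<otimes> g \<in> H"
      using h H_sub by (auto simp: core_eq)
    have "inv g \<otimes> (x \<otimes> h \<otimes> inv x) \<otimes> g \<in> H" if g: "g \<in> carrier G" for g
      using h_in(2)[of "inv x \<otimes> g"] x g h_in(1) by (simp add: m_assoc inv_mult_group)
    then show ?thesis
      using x h_in(1) H_sub by (simp add: core_eq)
  qed
  ultimately show ?thesis
    by (simp add: normal_inv_iff)
qed

end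

lemma iso_FactGroup_pow_eq_one:
  assumes "group G" "group T" "C \<lhd> G" "\<phi> \<in> iso (G Mod C) T"
    and pow_in: "\<And>g. g \<in> carrier G \<Longrightarrow> g [^]\<^bsub>G\<^esub> m \<in> C"
    and t: "t \<in> carrier T"
  shows "t [^]\<^bsub>T\<^esub> (m::nat) = \<one>\<^bsub>T\<^esub>"
proof -
  interpret C: normal C G by fact
  have hom: "\<phi> \<in> hom (G Mod C) T" and "\<phi> ` carrier (G Mod C) = carrier T"
    using assms(4) by (auto simp: iso_def bij_betw_def)
  then obtain g where g: "g \<in> carrier G" "t = \<phi> (C #>\<^bsub>G\<^esub> g)"
    using t by (auto simp: carrier_FactGroup)
  have "(C #>\<^bsub>G\<^esub> g) [^]\<^bsub>G Mod C\<^esub> m = \<one>\<^bsub>G Mod C\<^esub>"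
    using C.FactGroup_pow[OF g(1)] C.rcos_const[OF assms(1) pow_in[OF g(1)]] by simp
  moreover have "C #>\<^bsub>G\<^esub> g \<in> carrier (G Mod C)"
    using g(1) by (simp add: carrier_FactGroup)
  ultimately show ?thesis
    using hom_nat_pow[OF hom _ C.factorgroup_is_group assms(2)]
      hom_one[OF hom C.factorgroup_is_group assms(2)] g(2) by metis
qed

section \<open>The holomorph and its action on \<open>N\<close>\<close>

lemma carrier_Hol: "carrier (Hol N) = carrier N \<times> auto N"
  by (simp add: Hol_def)

lemma mult_Hol:
  "s \<otimes>\<^bsub>Hol N\<^esub> t = (fst s \<otimes>\<^bsub>N\<^esub> snd s (fst t), compose (carrier N) (snd s) (snd t))"
  by (simp add: Hol_def)

lemma one_Hol: "\<one>\<^bsub>Hol N\<^esub> = (\<one>\<^bsub>N\<^esub>, \<lambda>x\<in>carrier N. x)"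
  by (simp add: Hol_def)

lemma auto_closed: "\<alpha> \<in> auto N \<Longrightarrow> x \<in> carrier N \<Longrightarrow> \<alpha> x \<in> carrier N"
  by (metis IntD1 auto_def hom_in_carrier)

lemma auto_mult:
  "\<alpha> \<in> auto N \<Longrightarrow> x \<in> carrier N \<Longrightarrow> y \<in> carrier N \<Longrightarrow> \<alpha> (x \<otimes>\<^bsub>N\<^esub> y) = \<alpha> x \<otimes>\<^bsub>N\<^esub> \<alpha> y"
  by (simp add: auto_def hom_mult)

lemma group_Hol:
  assumes "group N"
  shows "group (Hol N)"
proof -
  interpret N: group N by fact
  interpret A: group "AutoGroup N" by (rule N.AutoGroup)
  note A = N.carrier_AutoGroup N.one_AutoGroup N.mult_AutoGroup
  show ?thesis
  proof (rule groupI)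
    fix s t assume "s \<in> carrier (Hol N)" "t \<in> carrier (Hol N)"
    then show "s \<otimes>\<^bsub>Hol N\<^esub> t \<in> carrier (Hol N)"
      using A.m_closed by (auto simp: carrier_Hol mult_Hol A auto_closed)
  next
    show "\<one>\<^bsub>Hol N\<^esub> \<in> carrier (Hol N)"
      by (simp add: carrier_Hol one_Hol N.id_in_auto)
  next
    fix s t r assume "s \<in> carrier (Hol N)" "t \<in> carrier (Hol N)" "r \<in> carrier (Hol N)"
    then obtain \<eta> \<alpha> \<eta>' \<alpha>' \<eta>'' \<alpha>'' where
      st: "s = (\<eta>, \<alpha>)" "t = (\<eta>', \<alpha>')" "r = (\<eta>'', \<alpha>'')"
      and in_N: "\<eta> \<in> carrier N" "\<eta>' \<in> carrier N" "\<eta>'' \<in> carrier N"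
      and in_A: "\<alpha> \<in> auto N" "\<alpha>' \<in> auto N" "\<alpha>'' \<in> auto N"
      by (auto simp: carrier_Hol)
    have "compose (carrier N) (compose (carrier N) \<alpha> \<alpha>') \<alpha>''
        = compose (carrier N) \<alpha> (compose (carrier N) \<alpha>' \<alpha>'')"
      using A.m_assoc[of \<alpha> \<alpha>' \<alpha>''] in_A A.m_closed by (simp add: A)
    then show "s \<otimes>\<^bsub>Hol N\<^esub> t \<otimes>\<^bsub>Hol N\<^esub> r = s \<otimes>\<^bsub>Hol N\<^esub> (t \<otimes>\<^bsub>Hol N\<^esub> r)"
      using st in_N in_A by (simp add: mult_Hol compose_eq auto_mult auto_closed N.m_assoc)
  next
    fix s assume "s \<in> carrier (Hol N)"
    then show "\<one>\<^bsub>Hol N\<^esub> \<otimes>\<^bsub>Hol N\<^esub> s = s"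
      using A.l_one N.id_in_auto by (auto simp: carrier_Hol mult_Hol one_Hol A auto_closed)
  next
    fix s assume "s \<in> carrier (Hol N)"
    then obtain \<eta> \<alpha> where s: "s = (\<eta>, \<alpha>)" "\<eta> \<in> carrier N" "\<alpha> \<in> auto N"
      by (auto simp: carrier_Hol)
    define \<beta> where "\<beta> = inv\<^bsub>AutoGroup N\<^esub> \<alpha>"
    have \<beta>: "\<beta> \<in> auto N" "compose (carrier N) \<beta> \<alpha> = (\<lambda>x\<in>carrier N. x)"
      using A.inv_closed A.l_inv s(3) by (simp_all add: \<beta>_def A)
    then have "(\<beta> (inv\<^bsub>N\<^esub> \<eta>), \<beta>) \<otimes>\<^bsub>Hol N\<^esub> s = \<one>\<^bsub>Hol N\<^esub>"
      using s by (simp add: mult_Hol one_Hol N.auto_one flip: auto_mult)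
    moreover have "(\<beta> (inv\<^bsub>N\<^esub> \<eta>), \<beta>) \<in> carrier (Hol N)"
      using s(2) \<beta>(1) by (simp add: carrier_Hol auto_closed)
    ultimately show "\<exists>t\<in>carrier (Hol N). t \<otimes>\<^bsub>Hol N\<^esub> s = \<one>\<^bsub>Hol N\<^esub>"
      by blast
  qed
qed

context
  fixes N :: "'a monoid"
  assumes N: "group N"
begin

interpretation N: group N by (rule N)
interpretation Hol: group "Hol N" by (rule group_Hol[OF N])

lemma hol_act_closed: "g \<in> carrier (Hol N) \<Longrightarrow> x \<in> carrier N \<Longrightarrow> hol_act N g x \<in> carrier N"
  by (auto simp: carrier_Hol hol_act_def auto_closed)

lemma hol_act_one [simp]: "x \<in> carrier N \<Longrightarrow> hol_act N \<one>\<^bsub>Hol N\<^esub> x = x"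
  by (simp add: one_Hol hol_act_def)

lemma hol_act_mult:
  assumes "g \<in> carrier (Hol N)" "h \<in> carrier (Hol N)" "x \<in> carrier N"
  shows "hol_act N (g \<otimes>\<^bsub>Hol N\<^esub> h) x = hol_act N g (hol_act N h x)"
  using assms
  by (auto simp: carrier_Hol mult_Hol hol_act_def compose_eq auto_closed auto_mult N.m_assoc)

lemma hol_act_at_one: "g \<in> carrier (Hol N) \<Longrightarrow> hol_act N g \<one>\<^bsub>N\<^esub> = fst g"
  by (auto simp: carrier_Hol hol_act_def N.auto_one)

lemma hol_stab_eq:
  assumes "G \<subseteq> carrier (Hol N)"
  shows "hol_stab N G = {g \<in> G. hol_act N g \<one>\<^bsub>N\<^esub> = \<one>\<^bsub>N\<^esub>}"
  using assms by (auto simp: hol_stab_def carrier_Hol hol_act_at_one)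

lemma eq_one_if_hol_act_fixes_all:
  assumes g: "g \<in> carrier (Hol N)" and fixed: "\<And>x. x \<in> carrier N \<Longrightarrow> hol_act N g x = x"
  shows "g = \<one>\<^bsub>Hol N\<^esub>"
proof -
  obtain \<eta> \<alpha> where g_eq: "g = (\<eta>, \<alpha>)" and \<alpha>: "\<alpha> \<in> auto N"
    using g by (auto simp: carrier_Hol)
  have \<eta>: "\<eta> = \<one>\<^bsub>N\<^esub>"
    using fixed[of "\<one>\<^bsub>N\<^esub>"] hol_act_at_one[OF g] by (simp add: g_eq)
  have "\<alpha> = (\<lambda>x\<in>carrier N. x)"
  proof (rule extensionalityI)
    show "\<alpha> \<in> extensional (carrier N)"
      using \<alpha> by (simp add: auto_def Bij_def)
    fix x assume "x \<in> carrier N"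
    then show "\<alpha> x = (\<lambda>x\<in>carrier N. x) x"
      using fixed[of x] \<alpha> by (simp add: hol_act_def g_eq \<eta> auto_def hom_def Pi_iff)
  qed simp
  then show ?thesis by (simp add: g_eq \<eta> one_Hol)
qed

lemma hol_act_pow_fixed:
  assumes "h \<in> carrier (Hol N)" "x \<in> carrier N" "hol_act N h x = x"
  shows "hol_act N (h [^]\<^bsub>Hol N\<^esub> (k::nat)) x = x"
  using assms by (induction k) (simp_all add: hol_act_mult)

lemma hol_act_inv_cancel:
  assumes "g \<in> carrier (Hol N)" "x \<in> carrier N"
  shows "hol_act N (inv\<^bsub>Hol N\<^esub> g) (hol_act N g x) = x"
    and "hol_act N g (hol_act N (inv\<^bsub>Hol N\<^esub> g) x) = x"
  using assms hol_act_mult[of "inv\<^bsub>Hol N\<^esub> g" g x] hol_act_mult[of g "inv\<^bsub>Hol N\<^esub> g" x] by simp_all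

lemma group_action_hol_act:
  "group_action (Hol N) (carrier N) (\<lambda>g. \<lambda>x\<in>carrier N. hol_act N g x)" (is "group_action _ _ ?\<phi>")
proof -
  have bij: "?\<phi> g \<in> Bij (carrier N)" if g: "g \<in> carrier (Hol N)" for g
  proof -
    have "bij_betw (hol_act N g) (carrier N) (carrier N)"
      by (rule bij_betwI[where g = "hol_act N (inv\<^bsub>Hol N\<^esub> g)"])
        (use g in \<open>simp_all add: hol_act_closed hol_act_inv_cancel\<close>)
    then show ?thesis
      by (simp add: Bij_def)
  qed
  have "?\<phi> (g \<otimes>\<^bsub>Hol N\<^esub> h) = ?\<phi> g \<otimes>\<^bsub>BijGroup (carrier N)\<^esub> ?\<phi> h"
    if g: "g \<in> carrier (Hol N)" and h: "h \<in> carrier (Hol N)" for g h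
  proof -
    have "?\<phi> (g \<otimes>\<^bsub>Hol N\<^esub> h) = compose (carrier N) (?\<phi> g) (?\<phi> h)"
      unfolding compose_def by (rule restrict_ext) (simp add: g h hol_act_mult hol_act_closed)
    then show ?thesis
      using bij[OF g] bij[OF h] by (simp add: BijGroup_def)
  qed
  then have "?\<phi> \<in> hom (Hol N) (BijGroup (carrier N))"
    using bij by (intro homI) (simp_all add: BijGroup_def)
  then show ?thesis
    unfolding group_action_def group_hom_def group_hom_axioms_def
    using Hol.is_group group_BijGroup by blast
qed

lemma card_hol_transitive:
  assumes G: "subgroup G (Hol N)" and tr: "hol_transitive N G"
  shows "card G = card (carrier N) * card (hol_stab N G)"
proof -
  let ?\<phi> = "\<lambda>g. \<lambda>x\<in>carrier N. hol_act N g x"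
  interpret G: group_action "(Hol N)\<lparr>carrier := G\<rparr>" "carrier N" ?\<phi>
    by (rule group_action.induced_action[OF group_action_hol_act G])
  have G_sub: "G \<subseteq> carrier (Hol N)"
    using G by (rule subgroup.subset)
  have "orbit ((Hol N)\<lparr>carrier := G\<rparr>) ?\<phi> \<one>\<^bsub>N\<^esub> = carrier N"
  proof (intro equalityI subsetI)
    fix y assume "y \<in> orbit ((Hol N)\<lparr>carrier := G\<rparr>) ?\<phi> \<one>\<^bsub>N\<^esub>"
    then show "y \<in> carrier N"
      using G_sub by (auto simp: orbit_def hol_act_closed)
  next
    fix y assume "y \<in> carrier N"
    then obtain g where "g \<in> G" "hol_act N g \<one>\<^bsub>N\<^esub> = y"
      using tr N.one_closed unfolding hol_transitive_def by blast
    then have "g \<in> carrier ((Hol N)\<lparr>carrier := G\<rparr>) \<and> y = ?\<phi> g \<one>\<^bsub>N\<^esub>"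
      by simp
    then show "y \<in> orbit ((Hol N)\<lparr>carrier := G\<rparr>) ?\<phi> \<one>\<^bsub>N\<^esub>"
      unfolding orbit_def by blast
  qed
  moreover have "stabilizer ((Hol N)\<lparr>carrier := G\<rparr>) ?\<phi> \<one>\<^bsub>N\<^esub> = hol_stab N G"
    by (simp add: stabilizer_def hol_stab_eq[OF G_sub])
  ultimately show ?thesis
    using G.orbit_stabilizer_theorem[OF N.one_closed] by (simp add: order_def)
qed

lemma hol_act_conjugate_fixes_iff:
  assumes "g \<in> carrier (Hol N)" "x \<in> carrier (Hol N)" "z \<in> carrier N"
  shows "hol_act N (inv\<^bsub>Hol N\<^esub> g \<otimes>\<^bsub>Hol N\<^esub> x \<otimes>\<^bsub>Hol N\<^esub> g) z = z
    \<longleftrightarrow> hol_act N x (hol_act N g z) = hol_act N g z"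
proof -
  have "hol_act N (inv\<^bsub>Hol N\<^esub> g \<otimes>\<^bsub>Hol N\<^esub> x \<otimes>\<^bsub>Hol N\<^esub> g) z
      = hol_act N (inv\<^bsub>Hol N\<^esub> g) (hol_act N x (hol_act N g z))"
    using assms by (simp add: hol_act_mult hol_act_closed)
  moreover have "hol_act N (inv\<^bsub>Hol N\<^esub> g) w = z \<longleftrightarrow> w = hol_act N g z" if "w \<in> carrier N" for w
    using assms that hol_act_inv_cancel by (metis Hol.inv_closed hol_act_closed)
  ultimately show ?thesis
    using assms by (simp add: hol_act_closed)
qed

lemma finite_carrier_Hol:
  assumes "finite (carrier N)"
  shows "finite (carrier (Hol N))"
proof -
  have "auto N \<subseteq> carrier N \<rightarrow>\<^sub>E carrier N"
    by (auto simp: auto_def PiE_def dest: Bij_imp_extensional Bij_imp_funcset)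
  then have "finite (auto N)"
    using assms by (rule finite_subset[OF _ finite_PiE]) (use assms in simp_all)
  then show ?thesis
    using assms by (simp add: carrier_Hol)
qed

lemma core_conjugate_hol_stab_subset:
  assumes G: "subgroup G (Hol N)" and tr: "hol_transitive N G" and g0: "g0 \<in> G"
  shows "core ((Hol N)\<lparr>carrier := G\<rparr>) (g0 <#\<^bsub>Hol N\<^esub> hol_stab N G #>\<^bsub>Hol N\<^esub> inv\<^bsub>Hol N\<^esub> g0)
    \<subseteq> {\<one>\<^bsub>Hol N\<^esub>}" (is "core ?G ?H \<subseteq> _")
proof
  interpret G: group ?G
    by (rule Hol.subgroup_imp_group[OF G])
  have G_sub: "G \<subseteq> carrier (Hol N)"
    using G by (rule subgroup.subset)
  have g0_in: "g0 \<in> carrier (Hol N)" and S_sub: "hol_stab N G \<subseteq> carrier (Hol N)"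
    using g0 G_sub by (auto simp: hol_stab_def)
  have H_sub: "?H \<subseteq> G"
    by (rule Hol.conjugate_subset_subgroup[OF G g0]) (auto simp: hol_stab_def)
  fix x assume x: "x \<in> core ?G ?H"
  have "x = \<one>\<^bsub>Hol N\<^esub>"
  proof (rule eq_one_if_hol_act_fixes_all)
    have x_core: "x \<in> G" "\<And>g. g \<in> G \<Longrightarrow> inv\<^bsub>Hol N\<^esub> g \<otimes>\<^bsub>Hol N\<^esub> x \<otimes>\<^bsub>Hol N\<^esub> g \<in> ?H"
      using x H_sub G.core_eq[of ?H] G by auto
    then show x_in: "x \<in> carrier (Hol N)"
      using G_sub by blast
    fix y assume "y \<in> carrier N"
    then obtain g where g: "g \<in> G" "hol_act N g \<one>\<^bsub>N\<^esub> = y"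
      using tr N.one_closed unfolding hol_transitive_def by blast
    then have g_in: "g \<in> carrier (Hol N)"
      using G_sub by blast
    have "g \<otimes>\<^bsub>Hol N\<^esub> inv\<^bsub>Hol N\<^esub> g0 \<in> G"
      using G g g0 by (auto intro: subgroup.m_closed subgroup.m_inv_closed)
    then have "inv\<^bsub>Hol N\<^esub> g0 \<otimes>\<^bsub>Hol N\<^esub> (inv\<^bsub>Hol N\<^esub> (g \<otimes>\<^bsub>Hol N\<^esub> inv\<^bsub>Hol N\<^esub> g0)
        \<otimes>\<^bsub>Hol N\<^esub> x \<otimes>\<^bsub>Hol N\<^esub> (g \<otimes>\<^bsub>Hol N\<^esub> inv\<^bsub>Hol N\<^esub> g0)) \<otimes>\<^bsub>Hol N\<^esub> g0 \<in> hol_stab N G"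
      using x_core(2) Hol.mem_conjugate_iff[OF g0_in S_sub] by blast
    then have "inv\<^bsub>Hol N\<^esub> g \<otimes>\<^bsub>Hol N\<^esub> x \<otimes>\<^bsub>Hol N\<^esub> g \<in> hol_stab N G"
      using g_in g0_in x_in by (simp add: Hol.m_assoc Hol.inv_mult_group)
    then show "hol_act N x y = y"
      using hol_act_conjugate_fixes_iff[OF g_in x_in N.one_closed] g(2) G_sub
      by (simp add: hol_stab_eq)
  qed
  then show "x \<in> {\<one>\<^bsub>Hol N\<^esub>}"
    by simp
qed

lemma core_conjugate_hol_stab:
  assumes G: "subgroup G (Hol N)" and tr: "hol_transitive N G" and g0: "g0 \<in> G"
  shows "core ((Hol N)\<lparr>carrier := G\<rparr>) (g0 <#\<^bsub>Hol N\<^esub> hol_stab N G #>\<^bsub>Hol N\<^esub> inv\<^bsub>Hol N\<^esub> g0)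
    = {\<one>\<^bsub>Hol N\<^esub>}" (is "core ?G ?H = _")
proof
  interpret G: group ?G
    by (rule Hol.subgroup_imp_group[OF G])
  have G_sub: "G \<subseteq> carrier (Hol N)"
    using G by (rule subgroup.subset)
  have g0_in: "g0 \<in> carrier (Hol N)" and S_sub: "hol_stab N G \<subseteq> carrier (Hol N)"
    using g0 G_sub by (auto simp: hol_stab_def)
  have "\<one>\<^bsub>Hol N\<^esub> \<in> hol_stab N G"
    using subgroup.one_closed[OF G] N.id_in_auto by (simp add: hol_stab_def one_Hol)
  then have "\<one>\<^bsub>Hol N\<^esub> \<in> ?H"
    using g0_in by (simp add: Hol.mem_conjugate_iff[OF g0_in S_sub])
  moreover have "?H \<subseteq> G"
    by (rule Hol.conjugate_subset_subgroup[OF G g0]) (auto simp: hol_stab_def)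
  ultimately show "{\<one>\<^bsub>Hol N\<^esub>} \<subseteq> core ?G ?H"
    using G.core_eq[of ?H] G G_sub subgroup.one_closed[OF G] by auto
qed (rule core_conjugate_hol_stab_subset[OF G tr g0])

lemma transitive_quotient_if_conjugate_hol_stab:
  assumes G: "subgroup G (Hol N)" and tr: "hol_transitive N G" and g0: "g0 \<in> G"
    and H: "H = g0 <#\<^bsub>Hol N\<^esub> hol_stab N G #>\<^bsub>Hol N\<^esub> inv\<^bsub>Hol N\<^esub> g0"
  shows "\<exists>T \<phi>. subgroup T (Hol N) \<and> hol_transitive N T \<and>
            \<phi> \<in> iso ((Hol N)\<lparr>carrier := G\<rparr> Mod core ((Hol N)\<lparr>carrier := G\<rparr>) H)
                    ((Hol N)\<lparr>carrier := T\<rparr>) \<and>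
            \<phi> ` ((\<lambda>h. core ((Hol N)\<lparr>carrier := G\<rparr>) H #>\<^bsub>Hol N\<^esub> h) ` H) = hol_stab N T"
proof (intro exI conjI)
  let ?G = "(Hol N)\<lparr>carrier := G\<rparr>"
  interpret G: group ?G
    by (rule Hol.subgroup_imp_group[OF G])
  have G_sub: "G \<subseteq> carrier (Hol N)"
    using G by (rule subgroup.subset)
  have g0_in: "g0 \<in> carrier (Hol N)"
    using g0 G_sub by blast
  have S_sub: "hol_stab N G \<subseteq> carrier (Hol N)"
    using G_sub by (auto simp: hol_stab_def)
  have core: "core ?G H = {\<one>\<^bsub>?G\<^esub>}"
    using core_conjugate_hol_stab[OF G tr g0] by (simp add: H)
  have "(\<lambda>x. inv\<^bsub>Hol N\<^esub> g0 \<otimes>\<^bsub>Hol N\<^esub> x \<otimes>\<^bsub>Hol N\<^esub> g0) \<in> iso ?G ?G"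
    using G.conjugation_iso[of g0] g0 G by simp
  then show "(\<lambda>x. inv\<^bsub>Hol N\<^esub> g0 \<otimes>\<^bsub>Hol N\<^esub> x \<otimes>\<^bsub>Hol N\<^esub> g0) \<circ> the_elem \<in> iso (?G Mod core ?G H) ?G"
    unfolding core by (rule iso_set_trans[OF G.trivial_factor_iso])
  have "(\<lambda>h. core ?G H #>\<^bsub>Hol N\<^esub> h) ` H = (\<lambda>h. {h}) ` H"
    using core H Hol.mem_conjugate_iff[OF g0_in S_sub] by (auto simp: r_coset_def)
  then show "((\<lambda>x. inv\<^bsub>Hol N\<^esub> g0 \<otimes>\<^bsub>Hol N\<^esub> x \<otimes>\<^bsub>Hol N\<^esub> g0) \<circ> the_elem)
      ` (\<lambda>h. core ?G H #>\<^bsub>Hol N\<^esub> h) ` H = hol_stab N G"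
    by (simp add: image_image H Hol.image_conjugate_cancel[OF g0_in S_sub])
qed (use G tr in auto)

lemma subset_conjugate_hol_stab_if_fixed:
  assumes G: "subgroup G (Hol N)" and g0: "g0 \<in> G" and H: "H \<subseteq> G"
    and fixed: "\<And>h. h \<in> H \<Longrightarrow> hol_act N h (hol_act N g0 \<one>\<^bsub>N\<^esub>) = hol_act N g0 \<one>\<^bsub>N\<^esub>"
  shows "H \<subseteq> g0 <#\<^bsub>Hol N\<^esub> hol_stab N G #>\<^bsub>Hol N\<^esub> inv\<^bsub>Hol N\<^esub> g0"
proof
  have G_sub: "G \<subseteq> carrier (Hol N)"
    using G by (rule subgroup.subset)
  then have g0_in: "g0 \<in> carrier (Hol N)" and S_sub: "hol_stab N G \<subseteq> carrier (Hol N)"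
    using g0 by (auto simp: hol_stab_def)
  fix h assume h: "h \<in> H"
  then have h_in: "h \<in> G" "h \<in> carrier (Hol N)"
    using H G_sub by auto
  have "inv\<^bsub>Hol N\<^esub> g0 \<otimes>\<^bsub>Hol N\<^esub> h \<otimes>\<^bsub>Hol N\<^esub> g0 \<in> G"
    using G g0 h_in(1) by (auto intro: subgroup.m_closed subgroup.m_inv_closed)
  moreover have "hol_act N (inv\<^bsub>Hol N\<^esub> g0 \<otimes>\<^bsub>Hol N\<^esub> h \<otimes>\<^bsub>Hol N\<^esub> g0) \<one>\<^bsub>N\<^esub> = \<one>\<^bsub>N\<^esub>"
    using hol_act_conjugate_fixes_iff[OF g0_in h_in(2) N.one_closed] fixed[OF h] by simp
  ultimately show "h \<in> g0 <#\<^bsub>Hol N\<^esub> hol_stab N G #>\<^bsub>Hol N\<^esub> inv\<^bsub>Hol N\<^esub> g0"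
    unfolding Hol.mem_conjugate_iff[OF g0_in S_sub] using h_in(2) by (simp add: hol_stab_eq[OF G_sub])
qed

lemma card_eq_card_hol_stab_if_index:
  assumes fin: "finite (carrier N)" and G: "subgroup G (Hol N)" and tr: "hol_transitive N G"
    and H: "subgroup H ((Hol N)\<lparr>carrier := G\<rparr>)"
    and index: "card (rcosets\<^bsub>(Hol N)\<lparr>carrier := G\<rparr>\<^esub> H) = card (carrier N)"
  shows "card H = card (hol_stab N G)"
proof -
  interpret G: group "(Hol N)\<lparr>carrier := G\<rparr>"
    by (rule Hol.subgroup_imp_group[OF G])
  have "card (carrier N) * card H = card (carrier N) * card (hol_stab N G)"
    using G.lagrange[OF H] card_hol_transitive[OF G tr] index by (simp add: order_def)
  moreover have "card (carrier N) \<noteq> 0"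
    using fin N.one_closed by (auto simp: card_eq_0_iff)
  ultimately show ?thesis
    by simp
qed

lemma conjugate_hol_stab_if_fixed_point:
  assumes fin: "finite (carrier N)" and G: "subgroup G (Hol N)" and tr: "hol_transitive N G"
    and H: "subgroup H ((Hol N)\<lparr>carrier := G\<rparr>)"
    and index: "card (rcosets\<^bsub>(Hol N)\<lparr>carrier := G\<rparr>\<^esub> H) = card (carrier N)"
    and x: "x \<in> carrier N" and fixed: "\<And>h. h \<in> H \<Longrightarrow> hol_act N h x = x"
  shows "\<exists>g\<in>G. H = g <#\<^bsub>Hol N\<^esub> hol_stab N G #>\<^bsub>Hol N\<^esub> inv\<^bsub>Hol N\<^esub> g"
proof -
  obtain g0 where g0: "g0 \<in> G" "hol_act N g0 \<one>\<^bsub>N\<^esub> = x"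
    using tr x N.one_closed unfolding hol_transitive_def by blast
  have g0_in: "g0 \<in> carrier (Hol N)" and S_sub: "hol_stab N G \<subseteq> carrier (Hol N)"
    using subgroup.subset[OF G] g0(1) by (auto simp: hol_stab_def)
  have "H \<subseteq> g0 <#\<^bsub>Hol N\<^esub> hol_stab N G #>\<^bsub>Hol N\<^esub> inv\<^bsub>Hol N\<^esub> g0"
    using subgroup.subset[OF H] fixed g0 by (intro subset_conjugate_hol_stab_if_fixed[OF G]) auto
  moreover have "finite (g0 <#\<^bsub>Hol N\<^esub> hol_stab N G #>\<^bsub>Hol N\<^esub> inv\<^bsub>Hol N\<^esub> g0)"
    using finite_carrier_Hol[OF fin] by (rule finite_subset[rotated]) (auto simp: Hol.mem_conjugate_iff[OF g0_in S_sub])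
  ultimately have "H = g0 <#\<^bsub>Hol N\<^esub> hol_stab N G #>\<^bsub>Hol N\<^esub> inv\<^bsub>Hol N\<^esub> g0"
    using card_eq_card_hol_stab_if_index[OF fin G tr H index] Hol.card_conjugate[OF g0_in S_sub]
    by (metis card_subset_eq)
  then show ?thesis
    using g0(1) by blast
qed

end

section \<open>The holomorph of a cyclic group of odd prime power order\<close>

text \<open>In the coordinates \<open>k \<mapsto> a [^] k\<close> of \<open>N\<close>, \<open>affine b u\<close> is the map \<open>x \<mapsto> b + u x\<close>.\<close>

locale cyclic_prime_power =
  fixes N :: "'a monoid" and p e :: nat and a :: 'a
  assumes comm_group: "comm_group N"
    and prime: "Factorial_Ring.prime p" and odd: "odd p" and e_pos: "0 < e"
    and generator: "a \<in> carrier N" and carrier_eq: "carrier N = range (\<lambda>k::int. a [^]\<^bsub>N\<^esub> k)"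
    and order: "order N = p ^ e"
begin

interpretation N: comm_group N
  by (rule comm_group)

interpretation Hol: group "Hol N"
  by (rule group_Hol[OF N.is_group])

abbreviation n :: int where "n \<equiv> int p ^ e"

definition power_map :: "int \<Rightarrow> 'a \<Rightarrow> 'a" where
  "power_map u = (\<lambda>x\<in>carrier N. x [^]\<^bsub>N\<^esub> u)"

definition affine :: "int \<Rightarrow> int \<Rightarrow> 'a \<times> ('a \<Rightarrow> 'a)" where
  "affine b u = (a [^]\<^bsub>N\<^esub> b, power_map u)"

lemma card_carrier: "card (carrier N) = p ^ e"
  using order by (simp add: order_def)

lemma ord_generator: "N.ord a = p ^ e"
proof -
  have "generate N {a} = carrier N"
    using N.generate_pow[OF generator] carrier_eq by auto
  then show ?thesis
    using N.generate_pow_card[OF generator] card_carrier by simp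
qed

lemma finite_carrier: "finite (carrier N)"
  using card_carrier prime_gt_0_nat[OF prime] card_ge_0_finite by force

lemma pow_generator_eq_iff: "a [^]\<^bsub>N\<^esub> (x::int) = a [^]\<^bsub>N\<^esub> (y::int) \<longleftrightarrow> [x = y] (mod n)"
  using N.int_pow_eq[OF generator, of x y] ord_generator
  by (simp add: cong_iff_dvd_diff dvd_diff_commute)

lemma pow_generator_eq_one_iff: "a [^]\<^bsub>N\<^esub> (x::int) = \<one>\<^bsub>N\<^esub> \<longleftrightarrow> [x = 0] (mod n)"
  using pow_generator_eq_iff[of x 0] by simp

lemma ex_pow_generator: "x \<in> carrier N \<Longrightarrow> \<exists>k::int. x = a [^]\<^bsub>N\<^esub> k"
  using carrier_eq by auto

lemma int_pow_cong:
  assumes "x \<in> carrier N" "[i = j] (mod n)"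
  shows "x [^]\<^bsub>N\<^esub> (i::int) = x [^]\<^bsub>N\<^esub> j"
proof -
  obtain k :: int where "x = a [^]\<^bsub>N\<^esub> k"
    using ex_pow_generator[OF assms(1)] ..
  moreover have "[k * i = k * j] (mod n)"
    using assms(2) by (rule cong_scalar_left)
  ultimately show ?thesis
    using generator by (simp add: N.int_pow_pow pow_generator_eq_iff)
qed

lemma coprime_modulus: "\<not> int p dvd u \<Longrightarrow> coprime u n"
  using coprime_if_not_prime_dvd[OF prime] by simp

lemma power_map_eq_iff: "power_map u = power_map v \<longleftrightarrow> [u = v] (mod n)"
proof
  assume "power_map u = power_map v"
  then have "power_map u a = power_map v a"
    by simp
  then show "[u = v] (mod n)"
    using generator by (simp add: power_map_def pow_generator_eq_iff)
next
  assume "[u = v] (mod n)"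
  then show "power_map u = power_map v"
    unfolding power_map_def by (intro restrict_ext int_pow_cong)
qed

lemma power_map_in_auto:
  assumes u: "\<not> int p dvd u"
  shows "power_map u \<in> auto N"
proof -
  obtain u' where u': "[u * u' = 1] (mod n)"
    using cong_solve_coprime_int[OF coprime_modulus[OF u]] ..
  have inverse: "power_map v (power_map w x) = x" if "[w * v = 1] (mod n)" "x \<in> carrier N" for v w x
    using that int_pow_cong[of x "w * v" 1] by (simp add: power_map_def N.int_pow_pow)
  have "bij_betw (power_map u) (carrier N) (carrier N)"
    by (rule bij_betwI[where g = "power_map u'"])
      (use u' inverse[of u u'] inverse[of u' u] in \<open>auto simp: power_map_def mult.commute\<close>)
  moreover have "power_map u \<in> hom N N"
    by (rule homI) (simp_all add: power_map_def N.int_pow_distrib)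
  ultimately show ?thesis
    by (simp add: auto_def Bij_def power_map_def)
qed

lemma not_dvd_if_power_map_inj:
  assumes "inj_on (power_map u) (carrier N)"
  shows "\<not> int p dvd u"
proof
  assume "int p dvd u"
  then obtain c where "u = int p * c" ..
  then have "int p ^ (e - 1) * u = n * c"
    using e_pos by (cases e) (simp_all add: algebra_simps)
  then have "power_map u (a [^]\<^bsub>N\<^esub> (int p ^ (e - 1))) = power_map u \<one>\<^bsub>N\<^esub>"
    using generator by (simp add: power_map_def N.int_pow_pow pow_generator_eq_one_iff cong_0_iff mult.commute)
  then have "a [^]\<^bsub>N\<^esub> (int p ^ (e - 1)) = \<one>\<^bsub>N\<^esub>"
    using assms generator by (auto dest: inj_onD)
  then have "int (p ^ e) dvd int (p ^ (e - 1))"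
    by (simp add: pow_generator_eq_one_iff cong_0_iff)
  then have "e \<le> e - 1"
    using prime_gt_1_nat[OF prime] by (simp only: of_nat_dvd_iff power_dvd_imp_le)
  then show False
    using e_pos by simp
qed

lemma auto_eq_power_map:
  assumes \<alpha>: "\<alpha> \<in> auto N"
  obtains u where "\<alpha> = power_map u" "\<not> int p dvd u"
proof -
  have hom: "\<alpha> \<in> hom N N"
    using \<alpha> by (simp add: auto_def)
  obtain u :: int where u: "\<alpha> a = a [^]\<^bsub>N\<^esub> u"
    using ex_pow_generator[OF auto_closed[OF \<alpha> generator]] ..
  have "\<alpha> x = power_map u x" if x: "x \<in> carrier N" for x
  proof -
    obtain k :: int where k: "x = a [^]\<^bsub>N\<^esub> k"
      using ex_pow_generator[OF x] ..
    then show ?thesis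
      using hom_int_pow[OF hom generator N.is_group N.is_group, of k] generator u
      by (simp add: power_map_def N.int_pow_pow mult.commute)
  qed
  then have \<alpha>_eq: "\<alpha> = power_map u"
    using \<alpha> by (intro extensionalityI[where A = "carrier N"]) (auto simp: auto_def Bij_def power_map_def)
  moreover have "inj_on (power_map u) (carrier N)"
    using \<alpha> by (simp add: \<alpha>_eq auto_def Bij_def bij_betw_def)
  ultimately show ?thesis
    using that not_dvd_if_power_map_inj by blast
qed

lemma affine_in_carrier: "\<not> int p dvd u \<Longrightarrow> affine b u \<in> carrier (Hol N)"
  using generator by (simp add: affine_def carrier_Hol power_map_in_auto)

lemma affine_cases:
  assumes "g \<in> carrier (Hol N)"
  obtains b u where "g = affine b u" "\<not> int p dvd u"
proof -
  obtain \<eta> \<alpha> where g: "g = (\<eta>, \<alpha>)" "\<eta> \<in> carrier N" "\<alpha> \<in> auto N"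
    using assms by (auto simp: carrier_Hol)
  obtain b :: int where "\<eta> = a [^]\<^bsub>N\<^esub> b"
    using ex_pow_generator[OF g(2)] ..
  moreover obtain u where "\<alpha> = power_map u" "\<not> int p dvd u"
    using auto_eq_power_map[OF g(3)] .
  ultimately show ?thesis
    using that g(1) by (simp add: affine_def)
qed

lemma affine_mult: "affine b u \<otimes>\<^bsub>Hol N\<^esub> affine c v = affine (b + u * c) (u * v)"
proof -
  have "compose (carrier N) (power_map u) (power_map v) = power_map (u * v)"
    unfolding compose_def power_map_def by (rule restrict_ext) (simp add: N.int_pow_pow mult.commute)
  then show ?thesis
    using generator by (simp add: mult_Hol affine_def power_map_def N.int_pow_pow N.int_pow_mult mult.commute)
qed

lemma affine_eq_iff: "affine b u = affine c v \<longleftrightarrow> [b = c] (mod n) \<and> [u = v] (mod n)"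
  by (simp add: affine_def pow_generator_eq_iff power_map_eq_iff)

lemma one_Hol_eq_affine: "\<one>\<^bsub>Hol N\<^esub> = affine 0 1"
proof -
  have "power_map 1 = (\<lambda>x\<in>carrier N. x)"
    unfolding power_map_def by (rule restrict_ext) simp
  then show ?thesis
    by (simp add: one_Hol affine_def)
qed

lemma hol_act_affine: "hol_act N (affine b u) (a [^]\<^bsub>N\<^esub> (x::int)) = a [^]\<^bsub>N\<^esub> (b + u * x)"
  using generator by (simp add: hol_act_def affine_def power_map_def N.int_pow_pow N.int_pow_mult mult.commute)

lemma affine_pow: "affine b u [^]\<^bsub>Hol N\<^esub> (k::nat) = affine (b * (\<Sum>i<k. u ^ i)) (u ^ k)"
  by (induction k) (simp_all add: one_Hol_eq_affine affine_mult algebra_simps)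

definition order_p_translations :: "('a \<times> ('a \<Rightarrow> 'a)) set" where
  "order_p_translations = {affine c 1 | c. n dvd int p * c}"

lemma pow_totient_in_order_p_translations:
  assumes "g \<in> carrier (Hol N)"
  shows "g [^]\<^bsub>Hol N\<^esub> totient (p ^ e) \<in> order_p_translations"
proof -
  obtain b u where g: "g = affine b u" and u: "\<not> int p dvd u"
    using affine_cases[OF assms] .
  have "coprime u (int (p ^ e))"
    using coprime_modulus[OF u] by simp
  from euler_theorem_int[OF this] have "[u ^ totient (p ^ e) = 1] (mod n)"
    by simp
  moreover obtain s where s: "(\<Sum>i<totient (p ^ e). u ^ i) = int p ^ (e - 1) * s"
    using prime_power_dvd_sum_powers_totient[OF prime odd e_pos u] ..
  ultimately have "g [^]\<^bsub>Hol N\<^esub> totient (p ^ e) = affine (b * (int p ^ (e - 1) * s)) 1"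
    by (simp add: g affine_pow affine_eq_iff)
  moreover have "int p * (b * (int p ^ (e - 1) * s)) = n * (b * s)"
    using e_pos by (cases e) simp_all
  ultimately show ?thesis
    unfolding order_p_translations_def by (metis (mono_tags, lifting) dvd_triv_left mem_Collect_eq)
qed

lemma conjugate_mem_order_p_translations:
  assumes g: "g \<in> carrier (Hol N)" and x: "x \<in> order_p_translations"
  shows "inv\<^bsub>Hol N\<^esub> g \<otimes>\<^bsub>Hol N\<^esub> x \<otimes>\<^bsub>Hol N\<^esub> g \<in> order_p_translations"
proof -
  obtain b u where g_eq: "g = affine b u" and u: "\<not> int p dvd u"
    using affine_cases[OF g] .
  obtain z where x_eq: "x = affine z 1" and z: "n dvd int p * z"
    using x by (auto simp: order_p_translations_def)
  have x_in: "x \<in> carrier (Hol N)"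
    using x_eq affine_in_carrier prime_gt_1_nat[OF prime] by simp
  have "inv\<^bsub>Hol N\<^esub> g \<otimes>\<^bsub>Hol N\<^esub> x \<otimes>\<^bsub>Hol N\<^esub> g \<in> carrier (Hol N)"
    using g x_in by simp
  then obtain c w where y: "inv\<^bsub>Hol N\<^esub> g \<otimes>\<^bsub>Hol N\<^esub> x \<otimes>\<^bsub>Hol N\<^esub> g = affine c w" "\<not> int p dvd w"
    by (rule affine_cases)
  have "g \<otimes>\<^bsub>Hol N\<^esub> (inv\<^bsub>Hol N\<^esub> g \<otimes>\<^bsub>Hol N\<^esub> x \<otimes>\<^bsub>Hol N\<^esub> g) = x \<otimes>\<^bsub>Hol N\<^esub> g"
    using g x_in by (simp add: Hol.m_assoc)
  then have "affine (b + u * c) (u * w) = affine (z + b) u"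
    unfolding y(1) by (simp add: g_eq x_eq affine_mult)
  then have "[b + u * c = b + z] (mod n)" and uw: "[u * w = u * 1] (mod n)"
    by (simp_all add: affine_eq_iff add.commute)
  then have uc: "[u * c = z] (mod n)"
    by (simp add: cong_add_lcancel)
  have w: "[w = 1] (mod n)"
    using uw by (rule cong_mult_lcancel[OF coprime_modulus[OF u], THEN iffD1])
  have "[int p * (u * c) = int p * z] (mod n)"
    using uc by (rule cong_scalar_left)
  then have "n dvd u * (int p * c)"
    using z cong_dvd_iff by (fastforce simp: mult.left_commute)
  moreover have "coprime n u"
    using coprime_modulus[OF u] by (rule coprime_commute[THEN iffD1])
  ultimately have "n dvd int p * c"
    by (simp add: coprime_dvd_mult_right_iff)
  moreover have "affine c w = affine c 1"
    using w by (simp add: affine_eq_iff)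
  ultimately show ?thesis
    unfolding y(1) order_p_translations_def by blast
qed

lemma order_p_translations_subset:
  assumes H: "subgroup H (Hol N)" and d: "affine d 1 \<in> H" "\<not> n dvd d"
  shows "order_p_translations \<subseteq> H"
proof
  fix x assume "x \<in> order_p_translations"
  then obtain c where x: "x = affine c 1" and c: "n dvd int p * c"
    by (auto simp: order_p_translations_def)
  obtain k :: nat where k: "[int k * d = c] (mod n)"
    using ex_multiple_cong[OF prime d(2) c] ..
  have "affine d 1 [^]\<^bsub>Hol N\<^esub> k \<in> H"
    by (rule Hol.subgroup_nat_pow_closed[OF H d(1)])
  moreover have "affine d 1 [^]\<^bsub>Hol N\<^esub> k = x"
    using k by (simp add: affine_pow x affine_eq_iff mult.commute)
  ultimately show "x \<in> H"
    by simp
qed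

lemma pow_totient_affine_one_ne_one:
  assumes u: "[u = 1] (mod int p)"
  shows "affine 1 u [^]\<^bsub>Hol N\<^esub> totient (p ^ e) \<noteq> \<one>\<^bsub>Hol N\<^esub>"
proof -
  have "\<not> int p dvd u"
    using cong_dvd_iff[OF u] prime_gt_1_nat[OF prime] by simp
  then have "[u ^ totient (p ^ e) = 1] (mod n)"
    using euler_theorem_int[of u "p ^ e"] coprime_modulus by simp
  then have "affine 1 u [^]\<^bsub>Hol N\<^esub> totient (p ^ e) = affine (\<Sum>i<totient (p ^ e). u ^ i) 1"
    by (simp add: affine_pow affine_eq_iff)
  then show ?thesis
    using not_dvd_sum_powers_totient[OF prime odd e_pos u]
    by (simp add: one_Hol_eq_affine affine_eq_iff cong_0_iff)
qed

lemma pow_totient_translation_ne_one: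
  "\<not> int p dvd c \<Longrightarrow> affine c 1 [^]\<^bsub>Hol N\<^esub> totient (p ^ e) \<noteq> \<one>\<^bsub>Hol N\<^esub>"
  using not_prime_power_dvd_mult_totient[OF prime e_pos]
  by (simp add: affine_pow one_Hol_eq_affine affine_eq_iff cong_0_iff)

lemma transitive_contains_affine_one:
  assumes T: "subgroup T (Hol N)" and tr: "hol_transitive N T"
  obtains u where "affine 1 u \<in> T" "\<not> int p dvd u"
proof -
  obtain t where t: "t \<in> T" "hol_act N t \<one>\<^bsub>N\<^esub> = a"
    using tr generator N.one_closed unfolding hol_transitive_def by blast
  then obtain b u where t_eq: "t = affine b u" and u: "\<not> int p dvd u"
    using subgroup.subset[OF T] affine_cases by blast
  have "a [^]\<^bsub>N\<^esub> b = a [^]\<^bsub>N\<^esub> (1::int)"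
    using t(2) hol_act_affine[of b u 0] generator by (simp add: t_eq)
  then have "t = affine 1 u"
    by (simp add: t_eq affine_eq_iff pow_generator_eq_iff)
  then show ?thesis
    using that t(1) u by blast
qed

text \<open>\<open>c\<close> is the fixed point of \<open>affine 1 u\<close>, and \<open>affine y v\<close> moves it to \<open>c + 1\<close>.\<close>

lemma affine_commutator_eq_translation:
  assumes "[(1 - u) * c = 1] (mod n)" and "[y + v * c = c + 1] (mod n)"
  shows "affine y v \<otimes>\<^bsub>Hol N\<^esub> affine 1 u = affine (1 - u) 1 \<otimes>\<^bsub>Hol N\<^esub> (affine 1 u \<otimes>\<^bsub>Hol N\<^esub> affine y v)"
proof -
  have "n dvd (1 - u) * (y + v * c - (c + 1)) + (1 - v) * ((1 - u) * c - 1)"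
    using assms by (simp add: cong_iff_dvd_diff)
  moreover have "(1 - u) * (y + v * c - (c + 1)) + (1 - v) * ((1 - u) * c - 1) = y + v - (1 - u + (1 + u * y))"
    by (simp add: algebra_simps)
  ultimately show ?thesis
    by (simp add: affine_mult affine_eq_iff cong_iff_dvd_diff mult.commute)
qed

lemma translation_in_transitive_subgroup:
  assumes T: "subgroup T (Hol N)" and tr: "hol_transitive N T"
    and t: "affine 1 u \<in> T" and u: "\<not> int p dvd 1 - u"
  shows "affine (1 - u) 1 \<in> T"
proof -
  have T_sub: "T \<subseteq> carrier (Hol N)"
    using T by (rule subgroup.subset)
  obtain c where c: "[(1 - u) * c = 1] (mod n)"
    using cong_solve_coprime_int[OF coprime_modulus[OF u]] ..
  obtain s where s: "s \<in> T" "hol_act N s (a [^]\<^bsub>N\<^esub> c) = a [^]\<^bsub>N\<^esub> (c + 1)"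
    using tr generator unfolding hol_transitive_def by (meson N.int_pow_closed)
  then obtain y v where s_eq: "s = affine y v"
    using T_sub affine_cases by blast
  have "[y + v * c = c + 1] (mod n)"
    using s(2) by (simp add: s_eq hol_act_affine pow_generator_eq_iff)
  then have comm: "s \<otimes>\<^bsub>Hol N\<^esub> affine 1 u = affine (1 - u) 1 \<otimes>\<^bsub>Hol N\<^esub> (affine 1 u \<otimes>\<^bsub>Hol N\<^esub> s)"
    using affine_commutator_eq_translation[OF c] by (simp add: s_eq)
  have "s \<in> carrier (Hol N)" "affine 1 u \<in> carrier (Hol N)" "affine (1 - u) 1 \<in> carrier (Hol N)"
    using s(1) t T_sub affine_in_carrier prime_gt_1_nat[OF prime] by auto
  then have "affine (1 - u) 1 = s \<otimes>\<^bsub>Hol N\<^esub> affine 1 u \<otimes>\<^bsub>Hol N\<^esub> inv\<^bsub>Hol N\<^esub> (affine 1 u \<otimes>\<^bsub>Hol N\<^esub> s)"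
    using comm by (simp add: Hol.inv_solve_right)
  then show ?thesis
    using T s(1) t by (auto intro: subgroup.m_closed subgroup.m_inv_closed)
qed

lemma transitive_ex_pow_totient_ne_one:
  assumes T: "subgroup T (Hol N)" and tr: "hol_transitive N T"
  shows "\<exists>t\<in>T. t [^]\<^bsub>Hol N\<^esub> totient (p ^ e) \<noteq> \<one>\<^bsub>Hol N\<^esub>"
proof -
  obtain u where t: "affine 1 u \<in> T"
    using transitive_contains_affine_one[OF T tr] .
  show ?thesis
  proof (cases "[u = 1] (mod int p)")
    case True
    then show ?thesis
      using t pow_totient_affine_one_ne_one by blast
  next
    case False
    then have "\<not> int p dvd 1 - u"
      by (simp add: cong_iff_dvd_diff dvd_diff_commute)
    then show ?thesis
      using translation_in_transitive_subgroup[OF T tr t] pow_totient_translation_ne_one by blast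
  qed
qed

lemma translations_trivial_if_quotient_transitive:
  assumes G: "subgroup G (Hol N)" and H: "subgroup H ((Hol N)\<lparr>carrier := G\<rparr>)"
    and T: "subgroup T (Hol N)" and tr: "hol_transitive N T"
    and \<phi>: "\<phi> \<in> iso ((Hol N)\<lparr>carrier := G\<rparr> Mod core ((Hol N)\<lparr>carrier := G\<rparr>) H) ((Hol N)\<lparr>carrier := T\<rparr>)"
    and c: "affine c 1 \<in> H"
  shows "n dvd c"
proof (rule ccontr)
  assume c_nontrivial: "\<not> n dvd c"
  let ?G = "(Hol N)\<lparr>carrier := G\<rparr>" and ?m = "totient (p ^ e)"
  interpret G: group ?G
    by (rule Hol.subgroup_imp_group[OF G])
  have G_sub: "G \<subseteq> carrier (Hol N)"
    using G by (rule subgroup.subset)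
  have H_sub: "H \<subseteq> G"
    using subgroup.subset[OF H] by simp
  have "order_p_translations \<subseteq> H"
    using order_p_translations_subset[OF Hol.incl_subgroup[OF G H] c c_nontrivial] .
  then have core: "order_p_translations \<subseteq> core ?G H"
    using H_sub G_sub conjugate_mem_order_p_translations G by (intro G.subset_core) auto
  have "g [^]\<^bsub>?G\<^esub> ?m \<in> core ?G H" if "g \<in> carrier ?G" for g
    using pow_totient_in_order_p_translations[of g] that G_sub core
    by (auto simp flip: Hol.nat_pow_consistent)
  then have "t [^]\<^bsub>(Hol N)\<lparr>carrier := T\<rparr>\<^esub> ?m = \<one>\<^bsub>(Hol N)\<lparr>carrier := T\<rparr>\<^esub>" if "t \<in> T" for t
    using iso_FactGroup_pow_eq_one[OF G.is_group Hol.subgroup_imp_group[OF T] G.core_normal[OF H] \<phi>] that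
    by simp
  then show False
    using transitive_ex_pow_totient_ne_one[OF T tr] by (simp flip: Hol.nat_pow_consistent)
qed

lemma unit_if_affine_in_carrier: "affine b u \<in> carrier (Hol N) \<Longrightarrow> \<not> int p dvd u"
proof (erule affine_cases)
  fix b' u' assume "affine b u = affine b' u'" "\<not> int p dvd u'"
  moreover have "int p dvd n"
    using e_pos by simp
  ultimately show "\<not> int p dvd u"
    by (metis affine_eq_iff cong_dvd_iff cong_dvd_modulus)
qed

lemma affine_eq_if_no_translations:
  assumes H: "subgroup H (Hol N)" and translation_free: "\<And>c. affine c 1 \<in> H \<Longrightarrow> n dvd c"
    and h: "affine c u \<in> H" and h': "affine c' u' \<in> H" and uu': "[u = u'] (mod n)"
  shows "affine c u = affine c' u'"
proof -
  have h_in: "affine c u \<in> carrier (Hol N)" "affine c' u' \<in> carrier (Hol N)"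
    using h h' subgroup.subset[OF H] by auto
  then have "inv\<^bsub>Hol N\<^esub> (affine c' u') \<otimes>\<^bsub>Hol N\<^esub> affine c u \<in> carrier (Hol N)"
    by simp
  then obtain d w where y: "inv\<^bsub>Hol N\<^esub> (affine c' u') \<otimes>\<^bsub>Hol N\<^esub> affine c u = affine d w"
    and "\<not> int p dvd w"
    by (rule affine_cases)
  have "affine c' u' \<otimes>\<^bsub>Hol N\<^esub> (inv\<^bsub>Hol N\<^esub> (affine c' u') \<otimes>\<^bsub>Hol N\<^esub> affine c u) = affine c u"
    using h_in by simp
  then have cd: "[c' + u' * d = c] (mod n)" and uw: "[u' * w = u' * 1] (mod n)"
    using uu' unfolding y by (auto simp: affine_mult affine_eq_iff intro: cong_trans cong_sym)
  from uw have "[w = 1] (mod n)"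
    by (rule cong_mult_lcancel[OF coprime_modulus[OF unit_if_affine_in_carrier[OF h_in(2)]], THEN iffD1])
  then have "affine d w = affine d 1"
    by (simp add: affine_eq_iff)
  moreover have "affine d w \<in> H"
    unfolding y[symmetric] using H h h' by (intro subgroup.m_closed subgroup.m_inv_closed)
  ultimately have "n dvd d"
    using translation_free by simp
  then have "[c' + u' * d = c'] (mod n)"
    by (simp add: cong_iff_dvd_diff)
  then have "[c' = c] (mod n)"
    using cd by (metis cong_sym cong_trans)
  then show ?thesis
    using uu' by (simp add: affine_eq_iff cong_sym)
qed

lemma not_dvd_residue_primroot:
  assumes "residue_primroot (p ^ e) g"
  shows "\<not> int p dvd int g"
proof -
  have "coprime p g"
    using assms e_pos by (simp add: residue_primroot_def)
  then show ?thesis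
    using prime_gt_1_nat[OF prime] by (auto dest: coprime_common_divisor)
qed

lemma ex_cong_power_primroot:
  assumes "residue_primroot (p ^ e) g" and u: "\<not> int p dvd u"
  obtains i where "[u = int g ^ i] (mod n)"
proof -
  have "1 < p ^ e"
    using prime_gt_1_nat[OF prime] e_pos by (rule one_less_power)
  moreover have "coprime u (int (p ^ e))"
    using coprime_modulus[OF u] by simp
  ultimately show ?thesis
    using ex_cong_power_residue_primroot[OF _ assms(1)] that by fastforce
qed

lemma primroot_exponents_of_subgroup:
  assumes H: "subgroup H (Hol N)" and g: "residue_primroot (p ^ e) g"
  shows "\<exists>c\<^sub>0 d. affine c\<^sub>0 (int g ^ d) \<in> H \<and> (\<forall>c i. affine c (int g ^ i) \<in> H \<longrightarrow> d dvd i)"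
proof -
  have g_order: "[int g ^ totient (p ^ e) = 1] (mod n)"
    using euler_theorem_int[of "int g" "p ^ e"] coprime_modulus[OF not_dvd_residue_primroot[OF g]]
    by simp
  define K where "K = {i. \<exists>c. affine c (int g ^ i) \<in> H}"
  have "\<exists>d\<in>K. \<forall>i\<in>K. d dvd i"
  proof (rule ex_dvd_generator_if_add_mod_closed)
    show "0 < totient (p ^ e)"
      using prime_gt_0_nat[OF prime] by simp
    show "0 \<in> K"
      using subgroup.one_closed[OF H] by (auto simp: K_def one_Hol_eq_affine)
  next
    fix i j assume "i \<in> K" "j \<in> K"
    then obtain c c' where "affine c (int g ^ i) \<in> H" "affine c' (int g ^ j) \<in> H"
      by (auto simp: K_def)
    then have "affine c (int g ^ i) \<otimes>\<^bsub>Hol N\<^esub> affine c' (int g ^ j) \<in> H"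
      using H by (intro subgroup.m_closed)
    then show "i + j \<in> K"
      by (auto simp: K_def affine_mult power_add)
  next
    fix i j assume "i \<in> K" and ij: "[i = j] (mod totient (p ^ e))"
    then obtain c where "affine c (int g ^ i) \<in> H"
      by (auto simp: K_def)
    moreover have "affine c (int g ^ i) = affine c (int g ^ j)"
      using power_cong_if_exponent_cong[OF g_order ij] by (simp add: affine_eq_iff)
    ultimately show "j \<in> K"
      by (auto simp: K_def)
  qed
  then show ?thesis
    by (auto simp: K_def)
qed

lemma subgroup_cyclic_if_no_translations:
  assumes H: "subgroup H (Hol N)" and translation_free: "\<And>c. affine c 1 \<in> H \<Longrightarrow> n dvd c"
  shows "\<exists>h\<^sub>0\<in>H. \<forall>h\<in>H. \<exists>k::nat. h = h\<^sub>0 [^]\<^bsub>Hol N\<^esub> k"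
proof -
  obtain g where "\<forall>k>0. residue_primroot (p ^ k) g"
    using residue_primroot_odd_prime_power_exists[OF prime odd] by blast
  then have g: "residue_primroot (p ^ e) g"
    using e_pos by blast
  obtain c\<^sub>0 d where h\<^sub>0: "affine c\<^sub>0 (int g ^ d) \<in> H"
    and d: "\<And>c i. affine c (int g ^ i) \<in> H \<Longrightarrow> d dvd i"
    using primroot_exponents_of_subgroup[OF H g] by (elim exE conjE) auto
  have "\<exists>k::nat. h = affine c\<^sub>0 (int g ^ d) [^]\<^bsub>Hol N\<^esub> k" if h: "h \<in> H" for h
  proof -
    obtain c u where h_eq: "h = affine c u" and u: "\<not> int p dvd u"
      using h subgroup.subset[OF H] affine_cases by blast
    obtain i where i: "[u = int g ^ i] (mod n)"
      using ex_cong_power_primroot[OF g u] .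
    then have "affine c (int g ^ i) = h"
      by (simp add: h_eq affine_eq_iff cong_sym)
    then obtain k where "i = d * k"
      using d h by (metis dvdE)
    then have "h = affine c\<^sub>0 (int g ^ d) [^]\<^bsub>Hol N\<^esub> k"
      using i h H Hol.subgroup_nat_pow_closed[OF H h\<^sub>0, of k]
      by (auto simp: h_eq affine_pow power_mult intro!: affine_eq_if_no_translations[OF H translation_free])
    then show ?thesis ..
  qed
  then show ?thesis
    using h\<^sub>0 by blast
qed

lemma fixed_point_if_no_translations:
  assumes h: "h \<in> carrier (Hol N)"
    and translation_free: "\<And>k c. h [^]\<^bsub>Hol N\<^esub> (k::nat) = affine c 1 \<Longrightarrow> n dvd c"
  shows "\<exists>x\<in>carrier N. hol_act N h x = x"
proof -
  obtain b u where h_eq: "h = affine b u" and u: "\<not> int p dvd u"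
    using affine_cases[OF h] .
  have "\<exists>x. [b + u * x = x] (mod n)"
  proof (rule affine_fixed_point_cong[OF prime odd u])
    fix k assume "[u ^ k = 1] (mod n)"
    then have "h [^]\<^bsub>Hol N\<^esub> k = affine (b * (\<Sum>i<k. u ^ i)) 1"
      by (simp add: h_eq affine_pow affine_eq_iff)
    then show "n dvd b * (\<Sum>i<k. u ^ i)"
      by (rule translation_free)
  qed
  then obtain x where "[b + u * x = x] (mod n)" ..
  then have "hol_act N h (a [^]\<^bsub>N\<^esub> x) = a [^]\<^bsub>N\<^esub> x"
    by (simp add: h_eq hol_act_affine pow_generator_eq_iff)
  then show ?thesis
    using generator by blast
qed

lemma common_fixed_point_if_no_translations:
  assumes H: "subgroup H (Hol N)" and translation_free: "\<And>c. affine c 1 \<in> H \<Longrightarrow> n dvd c"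
  shows "\<exists>x\<in>carrier N. \<forall>h\<in>H. hol_act N h x = x"
proof -
  obtain h\<^sub>0 where h\<^sub>0: "h\<^sub>0 \<in> H" and cyclic: "\<And>h. h \<in> H \<Longrightarrow> \<exists>k::nat. h = h\<^sub>0 [^]\<^bsub>Hol N\<^esub> k"
    using subgroup_cyclic_if_no_translations[OF H translation_free] by blast
  have h\<^sub>0_in: "h\<^sub>0 \<in> carrier (Hol N)"
    using h\<^sub>0 subgroup.subset[OF H] by blast
  obtain x where x: "x \<in> carrier N" "hol_act N h\<^sub>0 x = x"
    using fixed_point_if_no_translations[OF h\<^sub>0_in] translation_free
      Hol.subgroup_nat_pow_closed[OF H h\<^sub>0] by metis
  then have "hol_act N h x = x" if "h \<in> H" for h
    using cyclic[OF that] hol_act_pow_fixed[OF N.is_group h\<^sub>0_in] by auto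
  then show ?thesis
    using x(1) by blast
qed

lemma conjugate_hol_stab_if_transitive_quotient:
  assumes G: "subgroup G (Hol N)" and tr: "hol_transitive N G"
    and H: "subgroup H ((Hol N)\<lparr>carrier := G\<rparr>)"
    and index: "card (rcosets\<^bsub>(Hol N)\<lparr>carrier := G\<rparr>\<^esub> H) = p ^ e"
    and T: "subgroup T (Hol N)" "hol_transitive N T"
    and \<phi>: "\<phi> \<in> iso ((Hol N)\<lparr>carrier := G\<rparr> Mod core ((Hol N)\<lparr>carrier := G\<rparr>) H) ((Hol N)\<lparr>carrier := T\<rparr>)"
  shows "\<exists>g\<in>G. H = g <#\<^bsub>Hol N\<^esub> hol_stab N G #>\<^bsub>Hol N\<^esub> inv\<^bsub>Hol N\<^esub> g"
proof -
  have "\<And>c. affine c 1 \<in> H \<Longrightarrow> n dvd c"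
    using translations_trivial_if_quotient_transitive[OF G H T \<phi>] .
  then obtain x where "x \<in> carrier N" "\<And>h. h \<in> H \<Longrightarrow> hol_act N h x = x"
    using common_fixed_point_if_no_translations[OF Hol.incl_subgroup[OF G H]] by blast
  then show ?thesis
    using conjugate_hol_stab_if_fixed_point[OF N.is_group finite_carrier G tr H] index
    by (simp add: card_carrier)
qed

end

theorem proposition4p2:
  fixes p e :: nat and N :: "'a monoid"
    and G H :: "('a \<times> ('a \<Rightarrow> 'a)) set"
  assumes "Factorial_Ring.prime p" and "odd p" and "e \<ge> 2"
    and "group N" and "cyclic_group N" and "finite (carrier N)" and "order N = p ^ e"
    and "subgroup G (Hol N)" and "hol_transitive N G"
    and "subgroup H ((Hol N)\<lparr>carrier := G\<rparr>)"
    and "card (rcosets\<^bsub>(Hol N)\<lparr>carrier := G\<rparr>\<^esub> H) = p ^ e"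
  shows "(\<exists>T \<phi>. subgroup T (Hol N) \<and> hol_transitive N T \<and>
            \<phi> \<in> iso ((Hol N)\<lparr>carrier := G\<rparr> Mod core ((Hol N)\<lparr>carrier := G\<rparr>) H)
                    ((Hol N)\<lparr>carrier := T\<rparr>) \<and>
            \<phi> ` ((\<lambda>h. core ((Hol N)\<lparr>carrier := G\<rparr>) H #>\<^bsub>Hol N\<^esub> h) ` H) = hol_stab N T)
         \<longleftrightarrow> (\<exists>g\<in>G. H = g <#\<^bsub>Hol N\<^esub> hol_stab N G #>\<^bsub>Hol N\<^esub> inv\<^bsub>Hol N\<^esub> g)"
proof -
  interpret N: group N by fact
  obtain a where a: "a \<in> carrier N" "carrier N = range (\<lambda>k::int. a [^]\<^bsub>N\<^esub> k)"
    using N.cyclic_group \<open>cyclic_group N\<close> by blast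
  interpret cyclic_prime_power N p e a
    by (intro cyclic_prime_power.intro N.cyclic_imp_abelian_group[OF \<open>cyclic_group N\<close>])
      (use assms(1-3,7) a in auto)
  show ?thesis
    using conjugate_hol_stab_if_transitive_quotient[OF assms(8-11)]
      transitive_quotient_if_conjugate_hol_stab[OF assms(4,8,9)] by blast
qed

end
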